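(* Let $(X,\mathrm{dist})$ be a metric space, $\Sigma$ a metric space, and $\{U_\sigma(t,\tau)\}_{\sigma\in\Sigma}$ a family of processes on $X$. If the family is uniformly asymptotically compact, then it possesses the uniform global attractor $A_\Sigma$, and $A_\Sigma=A^\star_\Sigma$.
   Context: A process on $X$ is a family of maps $U(t,\tau):X\to X$, indexed by reals $t\ge\tau$, with $U(\tau,\tau)=\mathrm{id}_X$ and $U(t,\tau)=U(t,s)U(s,\tau)$ for $t\ge s\ge\tau$; no continuity is assumed. For nonempty $B,C\subset X$, $\delta_X(B,C)=\sup_{x\in B}\inf_{\xi\in C}\mathrm{dist}(x,\xi)$. A set $K\subset X$ is uniformly attracting if for every bounded $C\subset X$, $\lim_{t-\tau\to\infty}\sup_{\sigma\in\Sigma}\delta_X(U_\sigma(t,\tau)C,K)=0$. The family is uniformly asymptotically compact if there exists a compact uniformly attracting set. A compact set $A_\Sigma\subset X$ is the uniform global attractor of the family if it is uniformly attracting and is contained in every compact uniformly attracting set. $\mathfrak{C}_\Sigma$ is the collection of all sequences $y_n=U_{\sigma_n}(t_n,\tau_n)x_n$ with $x_n$ a bounded sequence in $X$, $\sigma_n\in\Sigma$, $t_n-\tau_n\to\infty$, and $A^\star_\Sigma=\{x\in X: y_n\to x$ along a subsequence, for some $y_n\in\mathfrak{C}_\Sigma\}$. *)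

theory Defs
  imports "HOL-Analysis.Analysis"
begin

text \<open>A process on X: U(t,tau) for t >= tau, with U(tau,tau) = id and the cocycle law.
  No continuity is assumed. Values for t < tau are irrelevant.\<close>
definition is_process :: "(real \<Rightarrow> real \<Rightarrow> 'a \<Rightarrow> 'a) \<Rightarrow> bool" where
  "is_process U \<longleftrightarrow>
     (\<forall>\<tau>. U \<tau> \<tau> = id) \<and>
     (\<forall>t s \<tau>. \<tau> \<le> s \<and> s \<le> t \<longrightarrow> U t \<tau> = U t s \<circ> U s \<tau>)"

definition hsemidist :: "'a::metric_space set \<Rightarrow> 'a set \<Rightarrow> ereal" where
  "hsemidist B C = (SUP x\<in>B. INF \<xi>\<in>C. ereal (dist x \<xi>))"

definition uniformly_attracting ::
  "('s \<Rightarrow> real \<Rightarrow> real \<Rightarrow> 'a::metric_space \<Rightarrow> 'a) \<Rightarrow> 'a set \<Rightarrow> bool" where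
  "uniformly_attracting U K \<longleftrightarrow>
     (\<forall>C. bounded C \<longrightarrow>
        (\<forall>e>0. \<exists>T. \<forall>t \<tau>. t - \<tau> \<ge> T \<longrightarrow>
            (SUP \<sigma>. hsemidist (U \<sigma> t \<tau> ` C) K) \<le> ereal e))"

definition uniformly_asymptotically_compact ::
  "('s \<Rightarrow> real \<Rightarrow> real \<Rightarrow> 'a::metric_space \<Rightarrow> 'a) \<Rightarrow> bool" where
  "uniformly_asymptotically_compact U \<longleftrightarrow>
     (\<exists>K. compact K \<and> uniformly_attracting U K)"

definition is_uniform_global_attractor ::
  "('s \<Rightarrow> real \<Rightarrow> real \<Rightarrow> 'a::metric_space \<Rightarrow> 'a) \<Rightarrow> 'a set \<Rightarrow> bool" where
  "is_uniform_global_attractor U A \<longleftrightarrow>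
     compact A \<and> uniformly_attracting U A \<and>
     (\<forall>K. compact K \<and> uniformly_attracting U K \<longrightarrow> A \<subseteq> K)"

definition Astar ::
  "('s \<Rightarrow> real \<Rightarrow> real \<Rightarrow> 'a::metric_space \<Rightarrow> 'a) \<Rightarrow> 'a set" where
  "Astar U = {x. \<exists>(xs :: nat \<Rightarrow> 'a) (\<sigma>s :: nat \<Rightarrow> 's) (ts :: nat \<Rightarrow> real) (\<tau>s :: nat \<Rightarrow> real)
                 (r :: nat \<Rightarrow> nat).
        bounded (range xs) \<and>
        filterlim (\<lambda>n. ts n - \<tau>s n) at_top sequentially \<and>
        strict_mono r \<and>
        (\<lambda>n. U (\<sigma>s (r n)) (ts (r n)) (\<tau>s (r n)) (xs (r n))) \<longlonglongrightarrow> x}"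

end

theory Submission
  imports Defs
begin

text \<open>
  A compact uniformly attracting set \<open>K\<close> pulls every sequence \<open>U\<^sub>\<sigma>\<^sub>n(t\<^sub>n,\<tau>\<^sub>n) x\<^sub>n\<close> with
  bounded \<open>x\<^sub>n\<close> and \<open>t\<^sub>n - \<tau>\<^sub>n \<rightarrow> \<infinity>\<close> towards \<open>K\<close>, so such sequences have limit points, all
  in \<open>K\<close>: hence \<open>A\<^sup>\<star>\<close> lies in every closed uniformly attracting set. If \<open>A\<^sup>\<star>\<close> failed to
  attract some bounded set, the offending orbit points would have a limit point, which by
  definition lies in \<open>A\<^sup>\<star>\<close>: a contradiction. Finally \<open>A\<^sup>\<star>\<close> is closed by a diagonal argument;
  the cocycle law lets every point of \<open>A\<^sup>\<star>\<close> be approximated by orbits starting in one fixed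
  bounded neighbourhood of \<open>K\<close>, which keeps the diagonal sequence of initial data bounded.
\<close>

lemma filterlim_at_top_if_real_le:
  fixes f :: "nat \<Rightarrow> real"
  assumes "\<And>n. real n \<le> f n"
  shows "filterlim f at_top sequentially"
  by (rule filterlim_at_top_mono[OF filterlim_real_sequentially]) (use assms in auto)

lemma bounded_thickening:
  assumes "bounded K"
  shows "bounded (\<Union>k\<in>K. ball k e)"
proof -
  obtain c b where "\<And>k. k \<in> K \<Longrightarrow> dist c k \<le> b"
    using assms unfolding bounded_def by blast
  then have "dist c w \<le> b + e" if "k \<in> K" "w \<in> ball k e" for k w
    using that dist_triangle[of c w k] by fastforce
  then have "(\<Union>k\<in>K. ball k e) \<subseteq> cball c (b + e)"
    by auto
  then show ?thesis
    using bounded_cball bounded_subset by blast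
qed

lemma tendsto_dist_0_transform:
  fixes f g :: "'b \<Rightarrow> 'a::metric_space"
  assumes "((\<lambda>x. dist (f x) (g x)) \<longlongrightarrow> 0) F" "(g \<longlongrightarrow> l) F"
  shows "(f \<longlongrightarrow> l) F"
proof -
  have "((\<lambda>x. dist (g x) l) \<longlongrightarrow> 0) F"
    using assms(2) tendsto_dist_iff by blast
  with assms(1) have "((\<lambda>x. dist (f x) l) \<longlongrightarrow> 0) F"
    by (rule Lim_null_comparison[OF always_eventually tendsto_add_zero, rotated])
       (simp add: dist_triangle)
  then show ?thesis
    using tendsto_dist_iff by blast
qed

lemma compact_infdist_attained:
  assumes "compact K" "K \<noteq> {}"
  obtains k where "k \<in> K" "infdist y K = dist y k"
proof -
  obtain k where "k \<in> K" "\<forall>k'\<in>K. dist y k \<le> dist y k'"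
    using continuous_attains_inf[OF assms continuous_on_dist[OF continuous_on_const continuous_on_id]]
    by auto
  then have "infdist y K = dist y k"
    by (metis antisym assms(2) cINF_greatest infdist_def infdist_le)
  with \<open>k \<in> K\<close> show ?thesis ..
qed

lemma compact_infdist_tendsto_0_imp_convergent_subseq:
  fixes y :: "nat \<Rightarrow> 'a::metric_space"
  assumes "compact K" "K \<noteq> {}" "(\<lambda>n. infdist (y n) K) \<longlonglongrightarrow> 0"
  obtains r l where "l \<in> K" "strict_mono r" "(y \<circ> r) \<longlonglongrightarrow> l"
proof -
  have "\<exists>k. k \<in> K \<and> infdist (y n) K = dist (y n) k" for n
    using compact_infdist_attained[OF assms(1,2)] by metis
  then obtain k where k: "\<And>n. k n \<in> K" "\<And>n. infdist (y n) K = dist (y n) (k n)"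
    by metis
  obtain l r where lr: "l \<in> K" "strict_mono r" "(k \<circ> r) \<longlonglongrightarrow> l"
    using seq_compactE[OF compact_imp_seq_compact[OF assms(1)]] k(1) by metis
  have "(\<lambda>n. dist (y (r n)) (k (r n))) \<longlonglongrightarrow> 0"
    using LIMSEQ_subseq_LIMSEQ[OF assms(3) lr(2)] by (simp add: k(2) o_def)
  then have "(y \<circ> r) \<longlonglongrightarrow> l"
    using tendsto_dist_0_transform lr(3) by (auto simp: o_def)
  then show ?thesis
    using that lr(1,2) by blast
qed

lemma uniformly_attractingE:
  fixes U :: "'s \<Rightarrow> real \<Rightarrow> real \<Rightarrow> 'a::metric_space \<Rightarrow> 'a"
  assumes "uniformly_attracting U K" "bounded C" "e > 0"
  obtains T where "\<And>\<sigma> t \<tau> x. T \<le> t - \<tau> \<Longrightarrow> x \<in> C \<Longrightarrow> \<exists>k\<in>K. dist (U \<sigma> t \<tau> x) k < e"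
proof -
  obtain T where T: "\<And>t \<tau>. T \<le> t - \<tau> \<Longrightarrow> (SUP \<sigma>. hsemidist (U \<sigma> t \<tau> ` C) K) \<le> ereal (e/2)"
    using assms unfolding uniformly_attracting_def by (meson half_gt_zero)
  have "\<exists>k\<in>K. dist (U \<sigma> t \<tau> x) k < e" if "T \<le> t - \<tau>" "x \<in> C" for \<sigma> t \<tau> x
  proof -
    have "(INF k\<in>K. ereal (dist (U \<sigma> t \<tau> x) k)) \<le> hsemidist (U \<sigma> t \<tau> ` C) K"
      unfolding hsemidist_def using that(2) by (auto intro!: SUP_upper)
    also have "\<dots> \<le> (SUP \<sigma>. hsemidist (U \<sigma> t \<tau> ` C) K)"
      by (rule SUP_upper) auto
    also have "\<dots> < ereal e"
      using T[OF that(1)] assms(3) by (simp add: le_less_trans)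
    finally show ?thesis
      by (auto simp: INF_less_iff)
  qed
  then show ?thesis
    using that by blast
qed

lemma uniformly_attractingI:
  fixes U :: "'s \<Rightarrow> real \<Rightarrow> real \<Rightarrow> 'a::metric_space \<Rightarrow> 'a"
  assumes "\<And>C e. bounded C \<Longrightarrow> e > 0 \<Longrightarrow>
             \<exists>T. \<forall>\<sigma> t \<tau> x. T \<le> t - \<tau> \<longrightarrow> x \<in> C \<longrightarrow> (\<exists>k\<in>K. dist (U \<sigma> t \<tau> x) k \<le> e)"
  shows "uniformly_attracting U K"
  unfolding uniformly_attracting_def
proof (intro allI impI)
  fix C :: "'a set" and e :: real
  assume "bounded C" "e > 0"
  then obtain T where T: "\<And>\<sigma> t \<tau> x. T \<le> t - \<tau> \<Longrightarrow> x \<in> C \<Longrightarrow> \<exists>k\<in>K. dist (U \<sigma> t \<tau> x) k \<le> e"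
    using assms by blast
  have "hsemidist (U \<sigma> t \<tau> ` C) K \<le> ereal e" if long: "T \<le> t - \<tau>" for \<sigma> t \<tau>
    unfolding hsemidist_def
  proof (rule SUP_least)
    fix y assume "y \<in> U \<sigma> t \<tau> ` C"
    then obtain k where "k \<in> K" "dist y k \<le> e"
      using T[OF long] by force
    then show "(INF k\<in>K. ereal (dist y k)) \<le> ereal e"
      by (meson INF_lower order_trans ereal_less_eq(3))
  qed
  then show "\<exists>T. \<forall>t \<tau>. T \<le> t - \<tau> \<longrightarrow> (SUP \<sigma>. hsemidist (U \<sigma> t \<tau> ` C) K) \<le> ereal e"
    by (blast intro: SUP_least)
qed

lemma uniformly_attracting_nonempty:
  fixes U :: "'s \<Rightarrow> real \<Rightarrow> real \<Rightarrow> 'a::metric_space \<Rightarrow> 'a"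
  assumes "uniformly_attracting U K"
  shows "K \<noteq> {}"
proof -
  fix x :: 'a
  obtain T where "\<And>\<sigma> t \<tau> y. T \<le> t - \<tau> \<Longrightarrow> y \<in> {x} \<Longrightarrow> \<exists>k\<in>K. dist (U \<sigma> t \<tau> y) k < 1"
    using uniformly_attractingE[OF assms, of "{x}" 1] by auto
  then show ?thesis
    by (metis diff_zero empty_iff order_refl singletonI)
qed

lemma uniformly_attracting_infdist_tendsto_0:
  fixes U :: "'s \<Rightarrow> real \<Rightarrow> real \<Rightarrow> 'a::metric_space \<Rightarrow> 'a"
  assumes "uniformly_attracting U K" "bounded (range xs)"
    and "filterlim (\<lambda>n. ts n - \<tau>s n) at_top sequentially"
  shows "(\<lambda>n. infdist (U (\<sigma>s n) (ts n) (\<tau>s n) (xs n)) K) \<longlonglongrightarrow> 0"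
proof (rule LIMSEQ_I)
  fix e :: real assume "e > 0"
  then obtain T where T: "\<And>\<sigma> t \<tau> x. T \<le> t - \<tau> \<Longrightarrow> x \<in> range xs \<Longrightarrow>
                            \<exists>k\<in>K. dist (U \<sigma> t \<tau> x) k < e"
    using uniformly_attractingE[OF assms(1,2)] by blast
  obtain N where N: "\<And>n. N \<le> n \<Longrightarrow> T \<le> ts n - \<tau>s n"
    using assms(3) by (auto simp: filterlim_at_top eventually_sequentially)
  have "infdist (U (\<sigma>s n) (ts n) (\<tau>s n) (xs n)) K < e" if "N \<le> n" for n
    using T[OF N[OF that], of "xs n"] by (meson infdist_le le_less_trans rangeI)
  then show "\<exists>N. \<forall>n\<ge>N. norm (infdist (U (\<sigma>s n) (ts n) (\<tau>s n) (xs n)) K - 0) < e"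
    by (auto simp: infdist_nonneg)
qed

lemma uniformly_attracting_convergent_subseq:
  fixes U :: "'s \<Rightarrow> real \<Rightarrow> real \<Rightarrow> 'a::metric_space \<Rightarrow> 'a"
  assumes "compact K" "uniformly_attracting U K" "bounded (range xs)"
    and "filterlim (\<lambda>n. ts n - \<tau>s n) at_top sequentially"
  obtains r l where "l \<in> K" "strict_mono r"
    "(\<lambda>n. U (\<sigma>s (r n)) (ts (r n)) (\<tau>s (r n)) (xs (r n))) \<longlonglongrightarrow> l"
proof -
  obtain r l where "l \<in> K" "strict_mono r"
      "((\<lambda>n. U (\<sigma>s n) (ts n) (\<tau>s n) (xs n)) \<circ> r) \<longlonglongrightarrow> l"
    using compact_infdist_tendsto_0_imp_convergent_subseq[OF assms(1)
        uniformly_attracting_nonempty[OF assms(2)]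
        uniformly_attracting_infdist_tendsto_0[OF assms(2-4)]] .
  then show ?thesis
    using that by (simp add: o_def)
qed

lemma Astar_subset:
  fixes U :: "'s \<Rightarrow> real \<Rightarrow> real \<Rightarrow> 'a::metric_space \<Rightarrow> 'a"
  assumes "closed K" "uniformly_attracting U K"
  shows "Astar U \<subseteq> K"
proof
  fix x assume "x \<in> Astar U"
  then obtain xs \<sigma>s ts \<tau>s r where x: "bounded (range xs)"
    "filterlim (\<lambda>n. ts n - \<tau>s n) at_top sequentially" "strict_mono r"
    "(\<lambda>n. U (\<sigma>s (r n)) (ts (r n)) (\<tau>s (r n)) (xs (r n))) \<longlonglongrightarrow> x"
    unfolding Astar_def by blast
  have "(\<lambda>n. infdist (U (\<sigma>s (r n)) (ts (r n)) (\<tau>s (r n)) (xs (r n))) K) \<longlonglongrightarrow> 0"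
    using LIMSEQ_subseq_LIMSEQ[OF uniformly_attracting_infdist_tendsto_0[OF assms(2) x(1,2)] x(3)]
    by (simp add: o_def)
  with tendsto_infdist[OF x(4)] have "infdist x K = 0"
    by (rule LIMSEQ_unique)
  then show "x \<in> K"
    using in_closed_iff_infdist_zero[OF assms(1) uniformly_attracting_nonempty[OF assms(2)]] by simp
qed

lemma Astar_memI:
  fixes U :: "'s \<Rightarrow> real \<Rightarrow> real \<Rightarrow> 'a::metric_space \<Rightarrow> 'a"
  assumes "bounded (range xs)" "filterlim (\<lambda>n. ts n - \<tau>s n) at_top sequentially"
    and "(\<lambda>n. U (\<sigma>s n) (ts n) (\<tau>s n) (xs n)) \<longlonglongrightarrow> x"
  shows "x \<in> Astar U"
proof -
  have "strict_mono (id :: nat \<Rightarrow> nat)"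
    by (rule strict_mono_id)
  then show ?thesis
    unfolding Astar_def using assms by fastforce
qed

lemma uniformly_attracting_Astar:
  fixes U :: "'s \<Rightarrow> real \<Rightarrow> real \<Rightarrow> 'a::metric_space \<Rightarrow> 'a"
  assumes "compact K" "uniformly_attracting U K"
  shows "uniformly_attracting U (Astar U)"
proof (rule uniformly_attractingI, rule ccontr)
  fix C :: "'a set" and e :: real
  assume C: "bounded C" and "e > 0"
  assume "\<nexists>T. \<forall>\<sigma> t \<tau> x. T \<le> t - \<tau> \<longrightarrow> x \<in> C \<longrightarrow> (\<exists>a\<in>Astar U. dist (U \<sigma> t \<tau> x) a \<le> e)"
  then have "\<exists>\<sigma> t \<tau> x. real n \<le> t - \<tau> \<and> x \<in> C \<and> (\<forall>a\<in>Astar U. e < dist (U \<sigma> t \<tau> x) a)" for n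
    by (meson not_le)
  then obtain \<sigma>s ts \<tau>s xs where seq: "\<And>n. real n \<le> ts n - \<tau>s n" "\<And>n. xs n \<in> C"
      "\<And>n a. a \<in> Astar U \<Longrightarrow> e < dist (U (\<sigma>s n) (ts n) (\<tau>s n) (xs n)) a"
    by metis
  have bounded: "bounded (range xs)"
    using C seq(2) by (meson bounded_subset image_subset_iff)
  have diverges: "filterlim (\<lambda>n. ts n - \<tau>s n) at_top sequentially"
    by (rule filterlim_at_top_if_real_le) (rule seq(1))
  obtain r l where r: "strict_mono r"
    and lim: "(\<lambda>n. U (\<sigma>s (r n)) (ts (r n)) (\<tau>s (r n)) (xs (r n))) \<longlonglongrightarrow> l"
    using uniformly_attracting_convergent_subseq[OF assms bounded diverges] by blast
  have "l \<in> Astar U"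
    unfolding Astar_def using bounded diverges r lim by blast
  moreover obtain N where "dist (U (\<sigma>s (r N)) (ts (r N)) (\<tau>s (r N)) (xs (r N))) l < e"
    using eventually_happens'[OF sequentially_bot tendstoD[OF lim \<open>e > 0\<close>]] by blast
  ultimately show False
    using seq(3)[OF \<open>l \<in> Astar U\<close>, of "r N"] by linarith
qed

text \<open>
  The cocycle law splits an approximating orbit at the time where it has entered the
  \<open>1\<close>-neighbourhood of \<open>K\<close>; the remaining piece starts there and is still arbitrarily long.
\<close>
lemma Astar_approx_from_thickening:
  fixes U :: "'s \<Rightarrow> real \<Rightarrow> real \<Rightarrow> 'a::metric_space \<Rightarrow> 'a"
  assumes "\<forall>\<sigma>. is_process (U \<sigma>)" "uniformly_attracting U K"
    and "a \<in> Astar U" "e > 0"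
  obtains \<sigma> t s w where "w \<in> (\<Union>k\<in>K. ball k 1)" "T' \<le> t - s" "dist (U \<sigma> t s w) a < e"
proof -
  obtain xs \<sigma>s ts \<tau>s r where a: "bounded (range xs)"
    "filterlim (\<lambda>n. ts n - \<tau>s n) at_top sequentially" "strict_mono r"
    "(\<lambda>n. U (\<sigma>s (r n)) (ts (r n)) (\<tau>s (r n)) (xs (r n))) \<longlonglongrightarrow> a"
    using assms(3) unfolding Astar_def by blast
  obtain T where T: "\<And>\<sigma> t \<tau> x. T \<le> t - \<tau> \<Longrightarrow> x \<in> range xs \<Longrightarrow> \<exists>k\<in>K. dist (U \<sigma> t \<tau> x) k < 1"
    using uniformly_attractingE[OF assms(2) a(1), of 1] by auto
  have "filterlim (\<lambda>n. ts (r n) - \<tau>s (r n)) at_top sequentially"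
    using filterlim_compose[OF a(2) filterlim_subseq[OF a(3)]] by (simp add: o_def)
  then have "eventually (\<lambda>n. max T 0 + max T' 0 \<le> ts (r n) - \<tau>s (r n)) sequentially"
    by (simp add: filterlim_at_top)
  then obtain n where n: "max T 0 + max T' 0 \<le> ts (r n) - \<tau>s (r n)"
      "dist (U (\<sigma>s (r n)) (ts (r n)) (\<tau>s (r n)) (xs (r n))) a < e"
    using eventually_happens'[OF sequentially_bot eventually_conj[OF _ tendstoD[OF a(4) assms(4)]]]
    by blast
  define \<sigma> t \<tau> x where "\<sigma> = \<sigma>s (r n)" and "t = ts (r n)" and "\<tau> = \<tau>s (r n)" and "x = xs (r n)"
  define s where "s = \<tau> + max T 0"
  have "\<tau> \<le> s" "s \<le> t"
    using n(1) by (auto simp: s_def t_def \<tau>_def)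
  then have "U \<sigma> t \<tau> x = U \<sigma> t s (U \<sigma> s \<tau> x)"
    using assms(1) unfolding is_process_def by simp
  moreover have "U \<sigma> s \<tau> x \<in> (\<Union>k\<in>K. ball k 1)"
    using T[of s \<tau> x \<sigma>] by (auto simp: s_def x_def dist_commute)
  moreover have "T' \<le> t - s"
    using n(1) by (simp add: s_def t_def \<tau>_def)
  ultimately show ?thesis
    using that n(2) by (metis \<sigma>_def t_def \<tau>_def x_def)
qed

lemma closed_Astar:
  fixes U :: "'s \<Rightarrow> real \<Rightarrow> real \<Rightarrow> 'a::metric_space \<Rightarrow> 'a"
  assumes "\<forall>\<sigma>. is_process (U \<sigma>)" "compact K" "uniformly_attracting U K"
  shows "closed (Astar U)"
  unfolding closed_sequential_limits
proof (intro allI impI, elim conjE)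
  fix a :: "nat \<Rightarrow> 'a" and l
  assume a: "\<forall>n. a n \<in> Astar U" and "a \<longlonglongrightarrow> l"
  have "\<exists>\<sigma> t s w. w \<in> (\<Union>k\<in>K. ball k 1) \<and> real n \<le> t - s \<and> dist (U \<sigma> t s w) (a n) < inverse (real (Suc n))"
    for n
    using Astar_approx_from_thickening[OF assms(1,3) a[rule_format, of n], of "inverse (real (Suc n))"]
    by (metis of_nat_0_less_iff positive_imp_inverse_positive zero_less_Suc)
  then obtain \<sigma>s ts \<tau>s ws where seq: "\<And>n. ws n \<in> (\<Union>k\<in>K. ball k 1)" "\<And>n. real n \<le> ts n - \<tau>s n"
      "\<And>n. dist (U (\<sigma>s n) (ts n) (\<tau>s n) (ws n)) (a n) < inverse (real (Suc n))"
    by metis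
  have bounded: "bounded (range ws)"
    using bounded_thickening[OF compact_imp_bounded[OF assms(2)]] seq(1)
    by (meson bounded_subset image_subset_iff)
  have "(\<lambda>n. dist (U (\<sigma>s n) (ts n) (\<tau>s n) (ws n)) (a n)) \<longlonglongrightarrow> 0"
    by (rule Lim_null_comparison[OF always_eventually LIMSEQ_inverse_real_of_nat])
       (use seq(3) in \<open>simp add: less_imp_le\<close>)
  then have "(\<lambda>n. U (\<sigma>s n) (ts n) (\<tau>s n) (ws n)) \<longlonglongrightarrow> l"
    using \<open>a \<longlonglongrightarrow> l\<close> by (rule tendsto_dist_0_transform)
  then show "l \<in> Astar U"
    by (rule Astar_memI[OF bounded filterlim_at_top_if_real_le[OF seq(2)]])
qed

theorem theorem3p5:
  fixes U :: "'s::metric_space \<Rightarrow> real \<Rightarrow> real \<Rightarrow> 'a::metric_space \<Rightarrow> 'a"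
  assumes "\<forall>\<sigma>. is_process (U \<sigma>)"
    and "uniformly_asymptotically_compact U"
  shows "\<exists>A. is_uniform_global_attractor U A \<and> A = Astar U"
proof -
  obtain K where K: "compact K" "uniformly_attracting U K"
    using assms(2) unfolding uniformly_asymptotically_compact_def by blast
  have "compact (Astar U)"
    using compact_Int_closed[OF K(1) closed_Astar[OF assms(1) K]]
      Astar_subset[OF compact_imp_closed[OF K(1)] K(2)] by (simp add: Int_absorb1)
  moreover have "uniformly_attracting U (Astar U)"
    using uniformly_attracting_Astar[OF K] .
  ultimately have "is_uniform_global_attractor U (Astar U)"
    unfolding is_uniform_global_attractor_def using Astar_subset compact_imp_closed by blast
  then show ?thesis
    by blast
qed

end
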